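(* Let $\mathcal U\subset Q\times Q$ be of $D$-type. Then $F_{D'R}\circ F_{RD'}=\mathrm{id}_{\Sigma_R(\mathcal U)}$; consequently $F_{RD'}:\Sigma_R(\mathcal U)\to\Sigma_D'(\mathcal U)$ is injective.
   Context: $G$ is a Lie group acting freely and properly on the left on $Q$ by $l^Q$; $\pi:Q\to Q/G$. $\tilde G=(Q\times G)/G$ for $g\cdot(q,h)=(l^Q_g(q),ghg^{-1})$, classes $[q,h]$; $[q_0,q_1]$ classes in $(Q\times Q)/G$ (diagonal action). $F_1([q,g])=[q,l^Q_g(q)]$, $F_2([q_0,q_1])=(\pi(q_0),\pi(q_1))$, $\hat F_1([q,g])=([q,g],\pi(q))$, $\hat F_2([q,g],r)=(\pi(q),r)$, $\hat s_2(\pi(q),r)=([q,e],r)$. $\mathcal V_d=\{(q,l^Q_g(q))\}$; an open $\mathcal U\subset Q\times Q$ is of $D$-type if it contains $\mathcal V_d$ and is invariant under $(g_0,g_1)\cdot(q_0,q_1)=(l^Q_{g_0}(q_0),l^Q_{g_1}(q_1))$. $\mathcal U''=(\pi\times\pi)(\mathcal U)$, $\mathcal W=\hat F_2^{-1}(\mathcal U'')$. Fiber bundles with section over $Q/G$: $\tilde G\times(Q/G)$ (projection $([q,h],r)\mapsto\pi(q)$, section $\pi(q)\mapsto([q,e],\pi(q))$), $(Q\times Q)/G$ (projection $[q_0,q_1]\mapsto\pi(q_0)$, section $[q,q]$), $(Q/G)^2$ (first projection, diagonal section). A semi-local morphism between such bundles is a smooth map on an open subset containing the image of the section, commuting with projections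 and sending section to section. $\Sigma_R(\mathcal U)$: semi-local morphisms $s:\mathcal U''\to(Q\times Q)/G$ with $F_2\circ s=\mathrm{id}_{\mathcal U''}$. $\Sigma_D'(\mathcal U)$: semi-local morphisms $\Psi:\mathcal W\to(Q\times Q)/G$ with $\Psi\circ\hat F_1=F_1$ and $F_2\circ\Psi=\hat F_2|_{\mathcal W}$. $F_{RD'}(s)([q,g],r)=[q,l^Q_g(q')]$ where $s(\pi(q),r)=[q,q']$; $F_{D'R}(\Psi)=\Psi\circ\hat s_2|_{\mathcal U''}$ (both maps are well defined between these sets). *)

theory Defs
  imports "HOL-Algebra.Group_Action"
begin

text \<open>Set-theoretic model. G is an HOL-Algebra group acting on the set Q by act
  (left action l^Q). Quotients are modelled by sets of orbits.\<close>

definition free_action :: "('g, 'b) monoid_scheme \<Rightarrow> 'q set \<Rightarrow> ('g \<Rightarrow> 'q \<Rightarrow> 'q) \<Rightarrow> bool" where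
  "free_action G Q act \<longleftrightarrow>
     (\<forall>g\<in>carrier G. \<forall>q\<in>Q. act g q = q \<longrightarrow> g = \<one>\<^bsub>G\<^esub>)"

definition qpi :: "('g, 'b) monoid_scheme \<Rightarrow> ('g \<Rightarrow> 'q \<Rightarrow> 'q) \<Rightarrow> 'q \<Rightarrow> 'q set" where
  "qpi G act q = {act g q | g. g \<in> carrier G}"

definition QmodG :: "('g, 'b) monoid_scheme \<Rightarrow> 'q set \<Rightarrow> ('g \<Rightarrow> 'q \<Rightarrow> 'q) \<Rightarrow> 'q set set" where
  "QmodG G Q act = qpi G act ` Q"

text \<open>class [q,h] in tilde G = (Q x G)/G\<close>
definition gtcls :: "('g, 'b) monoid_scheme \<Rightarrow> ('g \<Rightarrow> 'q \<Rightarrow> 'q) \<Rightarrow> 'q \<Rightarrow> 'g \<Rightarrow> ('q \<times> 'g) set" where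
  "gtcls G act q h = {(act g q, g \<otimes>\<^bsub>G\<^esub> h \<otimes>\<^bsub>G\<^esub> inv\<^bsub>G\<^esub> g) | g. g \<in> carrier G}"

definition Gtilde :: "('g, 'b) monoid_scheme \<Rightarrow> 'q set \<Rightarrow> ('g \<Rightarrow> 'q \<Rightarrow> 'q) \<Rightarrow> ('q \<times> 'g) set set" where
  "Gtilde G Q act = {gtcls G act q h | q h. q \<in> Q \<and> h \<in> carrier G}"

definition pcls :: "('g, 'b) monoid_scheme \<Rightarrow> ('g \<Rightarrow> 'q \<Rightarrow> 'q) \<Rightarrow> 'q \<Rightarrow> 'q \<Rightarrow> ('q \<times> 'q) set" where
  "pcls G act q0 q1 = {(act g q0, act g q1) | g. g \<in> carrier G}"

definition QQmodG :: "('g, 'b) monoid_scheme \<Rightarrow> 'q set \<Rightarrow> ('g \<Rightarrow> 'q \<Rightarrow> 'q) \<Rightarrow> ('q \<times> 'q) set set" where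
  "QQmodG G Q act = {pcls G act q0 q1 | q0 q1. q0 \<in> Q \<and> q1 \<in> Q}"

definition F2 :: "('g, 'b) monoid_scheme \<Rightarrow> ('g \<Rightarrow> 'q \<Rightarrow> 'q) \<Rightarrow> ('q \<times> 'q) set \<Rightarrow> 'q set \<times> 'q set" where
  "F2 G act c = (let p = (SOME p. p \<in> c) in (qpi G act (fst p), qpi G act (snd p)))"

definition hatF2 :: "('g, 'b) monoid_scheme \<Rightarrow> ('g \<Rightarrow> 'q \<Rightarrow> 'q) \<Rightarrow> ('q \<times> 'g) set \<times> 'q set \<Rightarrow> 'q set \<times> 'q set" where
  "hatF2 G act y = (let p = (SOME p. p \<in> fst y) in (qpi G act (fst p), snd y))"

definition hats2 :: "('g, 'b) monoid_scheme \<Rightarrow> 'q set \<Rightarrow> ('g \<Rightarrow> 'q \<Rightarrow> 'q) \<Rightarrow> 'q set \<times> 'q set \<Rightarrow> ('q \<times> 'g) set \<times> 'q set" where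
  "hats2 G Q act x = (gtcls G act (SOME q. q \<in> Q \<and> qpi G act q = fst x) \<one>\<^bsub>G\<^esub>, snd x)"

text \<open>D-type subsets (openness dropped)\<close>
definition Dtype :: "('g, 'b) monoid_scheme \<Rightarrow> 'q set \<Rightarrow> ('g \<Rightarrow> 'q \<Rightarrow> 'q) \<Rightarrow> ('q \<times> 'q) set \<Rightarrow> bool" where
  "Dtype G Q act U \<longleftrightarrow> U \<subseteq> Q \<times> Q
     \<and> (\<forall>q\<in>Q. \<forall>g\<in>carrier G. (q, act g q) \<in> U)
     \<and> (\<forall>g0\<in>carrier G. \<forall>g1\<in>carrier G. \<forall>(q0,q1)\<in>U. (act g0 q0, act g1 q1) \<in> U)"

definition Upp :: "('g, 'b) monoid_scheme \<Rightarrow> ('g \<Rightarrow> 'q \<Rightarrow> 'q) \<Rightarrow> ('q \<times> 'q) set \<Rightarrow> ('q set \<times> 'q set) set" where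
  "Upp G act U = (\<lambda>(q0,q1). (qpi G act q0, qpi G act q1)) ` U"

definition Wset :: "('g, 'b) monoid_scheme \<Rightarrow> 'q set \<Rightarrow> ('g \<Rightarrow> 'q \<Rightarrow> 'q) \<Rightarrow> ('q \<times> 'q) set \<Rightarrow> (('q \<times> 'g) set \<times> 'q set) set" where
  "Wset G Q act U = {y \<in> Gtilde G Q act \<times> QmodG G Q act. hatF2 G act y \<in> Upp G act U}"

definition SigmaR :: "('g, 'b) monoid_scheme \<Rightarrow> 'q set \<Rightarrow> ('g \<Rightarrow> 'q \<Rightarrow> 'q) \<Rightarrow> ('q \<times> 'q) set
     \<Rightarrow> ('q set \<times> 'q set \<Rightarrow> ('q \<times> 'q) set) set" where
  "SigmaR G Q act U = {s. s \<in> extensional (Upp G act U)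
     \<and> (\<forall>x\<in>Upp G act U. s x \<in> QQmodG G Q act \<and> F2 G act (s x) = x
                          \<and> fst (F2 G act (s x)) = fst x)
     \<and> (\<forall>q\<in>Q. (qpi G act q, qpi G act q) \<in> Upp G act U \<longrightarrow>
              s (qpi G act q, qpi G act q) = pcls G act q q)}"

definition FRD :: "('g, 'b) monoid_scheme \<Rightarrow> 'q set \<Rightarrow> ('g \<Rightarrow> 'q \<Rightarrow> 'q) \<Rightarrow> ('q \<times> 'q) set
     \<Rightarrow> ('q set \<times> 'q set \<Rightarrow> ('q \<times> 'q) set) \<Rightarrow> (('q \<times> 'g) set \<times> 'q set \<Rightarrow> ('q \<times> 'q) set)" where
  "FRD G Q act U s = (\<lambda>y\<in>Wset G Q act U.
     (let p = (SOME p. p \<in> fst y); q = fst p; g = snd p;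
          q' = (SOME q'. (q, q') \<in> s (qpi G act q, snd y))
      in pcls G act q (act g q')))"

definition FDR :: "('g, 'b) monoid_scheme \<Rightarrow> 'q set \<Rightarrow> ('g \<Rightarrow> 'q \<Rightarrow> 'q) \<Rightarrow> ('q \<times> 'q) set
     \<Rightarrow> (('q \<times> 'g) set \<times> 'q set \<Rightarrow> ('q \<times> 'q) set) \<Rightarrow> ('q set \<times> 'q set \<Rightarrow> ('q \<times> 'q) set)" where
  "FDR G Q act U \<Psi> = (\<lambda>x\<in>Upp G act U. \<Psi> (hats2 G Q act x))"

end

theory Submission
  imports Defs
begin

text \<open>Let \<open>x \<in> U''\<close> and \<open>s(x) = [a, b]\<close>. The section \<open>\<hat>s\<^sub>2\<close> sends \<open>x\<close> to a point
  \<open>([q, e], r)\<close> of \<open>W\<close>, and \<open>F\<^sub>2 \<circ> s = id\<close> forces \<open>\<pi>(q) = \<pi>(a)\<close>. So \<open>q = l\<^sub>k(a)\<close> and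
  \<open>(q, l\<^sub>k(b)) \<in> s(x)\<close>. Hence, whichever \<open>q'\<close> with \<open>(q, q') \<in> s(x)\<close> the choice operator picks,
  \<open>F\<^sub>R\<^sub>D\<^sub>'(s)\<close> takes the value \<open>[q, l\<^sub>e(q')] = s(x)\<close> at \<open>\<hat>s\<^sub>2(x)\<close>.\<close>

sublocale group_action \<subseteq> group G
  using group_hom group_hom.axioms(1) by auto

lemma qpi_eq_orbit: "qpi G act = orbit G act"
  unfolding qpi_def orbit_def by blast

context group_action
begin

lemma act_one: "x \<in> E \<Longrightarrow> \<phi> \<one> x = x"
  using id_eq_one by (metis restrict_apply')

lemma orbit_subset: "x \<in> E \<Longrightarrow> orbit G \<phi> x \<subseteq> E"
  unfolding orbit_def using element_image by blast

lemma orbit_act_eq: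
  assumes "x \<in> E" "g \<in> carrier G"
  shows "orbit G \<phi> (\<phi> g x) = orbit G \<phi> x"
proof -
  have gx: "\<phi> g x \<in> E" "\<phi> g x \<in> orbit G \<phi> x"
    using assms element_image unfolding orbit_def by blast+
  then have "x \<in> orbit G \<phi> (\<phi> g x)"
    using assms(1) orbit_sym by blast
  then show ?thesis
    using assms(1) gx orbit_subset orbit_trans by blast
qed

lemma orbit_eq_if_mem:
  assumes "x \<in> E" "y \<in> orbit G \<phi> x"
  shows "orbit G \<phi> y = orbit G \<phi> x"
proof -
  obtain g where "g \<in> carrier G" "y = \<phi> g x"
    using assms(2) unfolding orbit_def by blast
  then show ?thesis
    using assms(1) orbit_act_eq by simp
qed

lemma pcls_act_eq:
  assumes "x \<in> E" "y \<in> E" "g \<in> carrier G"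
  shows "pcls G \<phi> (\<phi> g x) (\<phi> g y) = pcls G \<phi> x y"
proof -
  have "pcls G \<phi> (\<phi> g x) (\<phi> g y) = {(\<phi> (k \<otimes> g) x, \<phi> (k \<otimes> g) y) | k. k \<in> carrier G}"
    unfolding pcls_def using assms by (force simp: composition_rule)
  also have "\<dots> = pcls G \<phi> x y"
    unfolding pcls_def
  proof (intro Collect_cong iffI; elim exE conjE)
    fix z k assume "z = (\<phi> (k \<otimes> g) x, \<phi> (k \<otimes> g) y)" "k \<in> carrier G"
    then show "\<exists>h. z = (\<phi> h x, \<phi> h y) \<and> h \<in> carrier G"
      using assms(3) by blast
  next
    fix z h assume "z = (\<phi> h x, \<phi> h y)" "h \<in> carrier G"
    moreover have "(h \<otimes> inv g) \<otimes> g = h"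
      using \<open>h \<in> carrier G\<close> assms(3) by (simp add: m_assoc)
    ultimately show "\<exists>k. z = (\<phi> (k \<otimes> g) x, \<phi> (k \<otimes> g) y) \<and> k \<in> carrier G"
      using assms(3) by (metis inv_closed m_closed)
  qed
  finally show ?thesis .
qed

lemma pcls_subset: "x \<in> E \<Longrightarrow> y \<in> E \<Longrightarrow> pcls G \<phi> x y \<subseteq> E \<times> E"
  unfolding pcls_def using element_image by blast

lemma pcls_eq_if_mem:
  assumes "x \<in> E" "y \<in> E" "(x', y') \<in> pcls G \<phi> x y"
  shows "pcls G \<phi> x' y' = pcls G \<phi> x y"
  using assms pcls_act_eq unfolding pcls_def by blast

lemma pcls_mem_if_orbit:
  assumes "x' \<in> orbit G \<phi> x"
  shows "\<exists>y'. (x', y') \<in> pcls G \<phi> x y"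
  using assms unfolding orbit_def pcls_def by blast

lemma F2_pcls:
  assumes "x \<in> E" "y \<in> E"
  shows "F2 G \<phi> (pcls G \<phi> x y) = (orbit G \<phi> x, orbit G \<phi> y)"
proof -
  define r where "r = (SOME r. r \<in> pcls G \<phi> x y)"
  have "r \<in> pcls G \<phi> x y"
    unfolding r_def pcls_def by (rule someI[of _ "(\<phi> \<one> x, \<phi> \<one> y)"]) blast
  then obtain g where "g \<in> carrier G" "r = (\<phi> g x, \<phi> g y)"
    unfolding pcls_def by blast
  then show ?thesis
    unfolding F2_def Let_def r_def[symmetric] qpi_eq_orbit using assms orbit_act_eq by simp
qed

lemma gtcls_one_memD:
  assumes "p \<in> gtcls G \<phi> q \<one>"
  shows "snd p = \<one>" "fst p \<in> orbit G \<phi> q"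
  using assms unfolding gtcls_def orbit_def by auto

lemma some_gtcls_one:
  "snd (SOME p. p \<in> gtcls G \<phi> q \<one>) = \<one> \<and> fst (SOME p. p \<in> gtcls G \<phi> q \<one>) \<in> orbit G \<phi> q"
proof -
  have "\<exists>p. p \<in> gtcls G \<phi> q \<one>"
    unfolding gtcls_def by blast
  then show ?thesis
    using someI_ex gtcls_one_memD by metis
qed

lemma hatF2_gtcls_one:
  assumes "q \<in> E"
  shows "hatF2 G \<phi> (gtcls G \<phi> q \<one>, r) = (orbit G \<phi> q, r)"
  using some_gtcls_one[of q] orbit_eq_if_mem[OF assms]
  unfolding hatF2_def qpi_eq_orbit by (simp add: Let_def)

lemma hats2_Upp:
  assumes "Dtype G E \<phi> U" "x \<in> Upp G \<phi> U"
  obtains q where "q \<in> E" "orbit G \<phi> q = fst x" "snd x \<in> QmodG G E \<phi>"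
    "hats2 G E \<phi> x = (gtcls G \<phi> q \<one>, snd x)"
proof -
  obtain x0 x1 where "(x0, x1) \<in> U" and x_eq: "x = (orbit G \<phi> x0, orbit G \<phi> x1)"
    using assms(2) unfolding Upp_def qpi_eq_orbit by auto
  with assms(1) have x0: "x0 \<in> E" and x1: "x1 \<in> E"
    unfolding Dtype_def by auto
  define q where "q = (SOME q. q \<in> E \<and> qpi G \<phi> q = fst x)"
  have "q \<in> E" "orbit G \<phi> q = fst x"
    using someI[of "\<lambda>q. q \<in> E \<and> qpi G \<phi> q = fst x" x0] x0 x_eq
    unfolding q_def qpi_eq_orbit by auto
  moreover have "snd x \<in> QmodG G E \<phi>"
    unfolding QmodG_def qpi_eq_orbit using x_eq x1 by simp
  moreover have "hats2 G E \<phi> x = (gtcls G \<phi> q \<one>, snd x)"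
    unfolding hats2_def q_def ..
  ultimately show ?thesis
    using that by blast
qed

lemma hats2_mem_Wset:
  assumes "Dtype G E \<phi> U" "x \<in> Upp G \<phi> U"
  shows "hats2 G E \<phi> x \<in> Wset G E \<phi> U"
proof -
  obtain q where q: "q \<in> E" "orbit G \<phi> q = fst x" "snd x \<in> QmodG G E \<phi>"
    and hats2_x: "hats2 G E \<phi> x = (gtcls G \<phi> q \<one>, snd x)"
    using hats2_Upp[OF assms] .
  have "gtcls G \<phi> q \<one> \<in> Gtilde G E \<phi>"
    unfolding Gtilde_def using q(1) by blast
  then show ?thesis
    unfolding Wset_def hats2_x using assms(2) q hatF2_gtcls_one by simp
qed

lemma SigmaR_memE:
  assumes "s \<in> SigmaR G E \<phi> U" "x \<in> Upp G \<phi> U"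
  obtains a b where "a \<in> E" "b \<in> E" "s x = pcls G \<phi> a b"
    "x = (orbit G \<phi> a, orbit G \<phi> b)"
proof -
  obtain a b where ab: "a \<in> E" "b \<in> E" "s x = pcls G \<phi> a b"
    using assms unfolding SigmaR_def QQmodG_def by blast
  moreover have "x = (orbit G \<phi> a, orbit G \<phi> b)"
    using assms ab F2_pcls unfolding SigmaR_def by auto
  ultimately show ?thesis
    using that by blast
qed

lemma FRD_hats2:
  assumes D: "Dtype G E \<phi> U" and s: "s \<in> SigmaR G E \<phi> U" and x: "x \<in> Upp G \<phi> U"
  shows "FRD G E \<phi> U s (hats2 G E \<phi> x) = s x"
proof -
  obtain q where q: "q \<in> E" "orbit G \<phi> q = fst x"
    and hats2_x: "hats2 G E \<phi> x = (gtcls G \<phi> q \<one>, snd x)"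
    using hats2_Upp[OF D x] .
  obtain a b where ab: "a \<in> E" "b \<in> E" "s x = pcls G \<phi> a b"
    and x_eq: "x = (orbit G \<phi> a, orbit G \<phi> b)"
    using SigmaR_memE[OF s x] .
  define p where "p = (SOME p. p \<in> gtcls G \<phi> q \<one>)"
  have p: "snd p = \<one>" "fst p \<in> orbit G \<phi> q"
    using some_gtcls_one[of q] unfolding p_def by auto
  have orbit_p: "orbit G \<phi> (fst p) = orbit G \<phi> a"
    using orbit_eq_if_mem[OF q(1) p(2)] q(2) x_eq by simp
  then have "fst p \<in> orbit G \<phi> a"
    using orbit_refl orbit_subset[OF q(1)] p(2) by blast
  then have "\<exists>q'. (fst p, q') \<in> pcls G \<phi> a b"
    by (rule pcls_mem_if_orbit)
  moreover define q' where "q' = (SOME q'. (fst p, q') \<in> s (qpi G \<phi> (fst p), snd x))"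
  moreover have "s (qpi G \<phi> (fst p), snd x) = pcls G \<phi> a b"
    using orbit_p x_eq ab(3) unfolding qpi_eq_orbit by simp
  ultimately have q': "(fst p, q') \<in> pcls G \<phi> a b"
    using someI_ex by simp
  then have "q' \<in> E"
    using pcls_subset[OF ab(1,2)] by blast
  have "FRD G E \<phi> U s (hats2 G E \<phi> x) = pcls G \<phi> (fst p) (\<phi> (snd p) q')"
    using hats2_mem_Wset[OF D x]
    unfolding FRD_def hats2_x by (simp add: Let_def p_def q'_def)
  also have "\<dots> = pcls G \<phi> (fst p) q'"
    using p(1) act_one \<open>q' \<in> E\<close> by simp
  also have "\<dots> = s x"
    using pcls_eq_if_mem[OF ab(1,2) q'] ab(3) by simp
  finally show ?thesis .
qed

end

theorem proposition3p30:
  fixes G :: "('g, 'b) monoid_scheme" and Q :: "'q set" and act :: "'g \<Rightarrow> 'q \<Rightarrow> 'q"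
    and U :: "('q \<times> 'q) set"
  assumes "group G"
    and "group_action G Q act"
    and "free_action G Q act"
    and "Dtype G Q act U"
  shows "(\<forall>s\<in>SigmaR G Q act U. FDR G Q act U (FRD G Q act U s) = s)
         \<and> inj_on (FRD G Q act U) (SigmaR G Q act U)"
proof -
  have left_inverse: "\<forall>s\<in>SigmaR G Q act U. FDR G Q act U (FRD G Q act U s) = s"
  proof
    fix s assume s: "s \<in> SigmaR G Q act U"
    show "FDR G Q act U (FRD G Q act U s) = s"
    proof (rule extensionalityI)
      show "FDR G Q act U (FRD G Q act U s) \<in> extensional (Upp G act U)"
        unfolding FDR_def by simp
      show "s \<in> extensional (Upp G act U)"
        using s unfolding SigmaR_def by simp
      show "FDR G Q act U (FRD G Q act U s) x = s x" if "x \<in> Upp G act U" for x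
        using group_action.FRD_hats2[OF assms(2,4) s that] that unfolding FDR_def by simp
    qed
  qed
  then show ?thesis
    using inj_on_inverseI[of "SigmaR G Q act U" "FDR G Q act U"] by blast
qed

end
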